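(* Let a group $G$ act on a set $X$, and suppose there are subsets $X_1,\dots,X_n\subseteq X$ and elements $h_1,\dots,h_n\in G$ such that, with $X_{n+1}:=X_1$, we have $h_iX_i\subseteq X_{i+1}$ for $1\le i\le n$ and $X=\bigcup_{i=1}^n\left(X_{i+1}\setminus h_iX_i\right)$. Then $G\curvearrowright X$ is paradoxical and $\tau(G\curvearrowright X)\le n+2$.
   Context: A paradoxical decomposition of $G\curvearrowright X$ consists of pairwise disjoint subsets $A_1,\dots,A_p,B_1,\dots,B_q$ of $X$ and elements $g_1,\dots,g_p,k_1,\dots,k_q\in G$ with $X=\bigcup_{i=1}^p g_iA_i=\bigcup_{j=1}^q k_jB_j$; the action is paradoxical if one exists. The Tarski number $\tau(G\curvearrowright X)$ is the minimal number of pieces $p+q$ in such a decomposition, and $\infty$ if none exists. *)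

theory Defs
  imports "HOL-Algebra.Group_Action" "HOL-Library.Extended_Nat"
begin

definition paradoxical_decomposition ::
  "('a, 'c) monoid_scheme \<Rightarrow> 'b set \<Rightarrow> ('a \<Rightarrow> 'b \<Rightarrow> 'b)
   \<Rightarrow> nat \<Rightarrow> nat \<Rightarrow> (nat \<Rightarrow> 'b set) \<Rightarrow> (nat \<Rightarrow> 'b set)
   \<Rightarrow> (nat \<Rightarrow> 'a) \<Rightarrow> (nat \<Rightarrow> 'a) \<Rightarrow> bool" where
  "paradoxical_decomposition G X act p q A B g k \<longleftrightarrow>
     (\<forall>i<p. A i \<subseteq> X) \<and> (\<forall>j<q. B j \<subseteq> X) \<and>
     (\<forall>i<p. g i \<in> carrier G) \<and> (\<forall>j<q. k j \<in> carrier G) \<and>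
     (\<forall>i<p. \<forall>i'<p. i \<noteq> i' \<longrightarrow> A i \<inter> A i' = {}) \<and>
     (\<forall>j<q. \<forall>j'<q. j \<noteq> j' \<longrightarrow> B j \<inter> B j' = {}) \<and>
     (\<forall>i<p. \<forall>j<q. A i \<inter> B j = {}) \<and>
     X = (\<Union>i<p. act (g i) ` A i) \<and>
     X = (\<Union>j<q. act (k j) ` B j)"

definition paradoxical_with ::
  "('a, 'c) monoid_scheme \<Rightarrow> 'b set \<Rightarrow> ('a \<Rightarrow> 'b \<Rightarrow> 'b) \<Rightarrow> nat \<Rightarrow> bool" where
  "paradoxical_with G X act m \<longleftrightarrow>
     (\<exists>p q A B g k. p + q = m \<and> paradoxical_decomposition G X act p q A B g k)"

definition paradoxical ::
  "('a, 'c) monoid_scheme \<Rightarrow> 'b set \<Rightarrow> ('a \<Rightarrow> 'b \<Rightarrow> 'b) \<Rightarrow> bool" where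
  "paradoxical G X act \<longleftrightarrow> (\<exists>m. paradoxical_with G X act m)"

definition tarski_number ::
  "('a, 'c) monoid_scheme \<Rightarrow> 'b set \<Rightarrow> ('a \<Rightarrow> 'b \<Rightarrow> 'b) \<Rightarrow> enat" where
  "tarski_number G X act =
     (if paradoxical G X act then enat (LEAST m. paradoxical_with G X act m) else \<infinity>)"

end

theory Submission
  imports Defs
begin

text \<open>Let \<open>M i = chain_prod G h i n = h n \<otimes> \<dots> \<otimes> h (i + 1)\<close>; it carries \<open>X (i + 1)\<close> into
  \<open>X (n + 1) = X 1\<close>. The layers \<open>L i = X (i + 1) - h i X i\<close> (\<open>1 \<le> i \<le> n\<close>) cover \<open>X\<close>; put \<open>L 0 = X 1\<close>.
  The translates \<open>M i L i\<close> (\<open>0 \<le> i \<le> n\<close>) are pairwise disjoint subsets of \<open>X 1\<close>: for \<open>i < i'\<close> we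
  have \<open>M i = M i' \<otimes> (h i' \<otimes> \<dots> \<otimes> h (i + 1))\<close>, and the second factor maps \<open>X (i + 1)\<close> into
  \<open>h i' X i'\<close>, which misses \<open>L i'\<close>. Hence the \<open>n\<close> pieces \<open>M i L i\<close> with \<open>i \<ge> 1\<close> are moved back
  onto the layers covering \<open>X\<close>, while the two pieces \<open>X - X 1\<close> and \<open>M 0 X 1\<close> are moved onto
  \<open>X - X 1\<close> and \<open>X 1\<close>.\<close>

lemma paradoxicalI: "paradoxical_with G X act m \<Longrightarrow> paradoxical G X act"
  unfolding paradoxical_def by blast

lemma tarski_number_le: "paradoxical_with G X act m \<Longrightarrow> tarski_number G X act \<le> enat m"
  unfolding tarski_number_def by (auto intro: paradoxicalI Least_le)

lemma paradoxical_with_empty: "paradoxical_with G {} act 0"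
  unfolding paradoxical_with_def paradoxical_decomposition_def by auto

fun chain_prod :: "('a, 'c) monoid_scheme \<Rightarrow> (nat \<Rightarrow> 'a) \<Rightarrow> nat \<Rightarrow> nat \<Rightarrow> 'a" where
  "chain_prod G h i 0 = \<one>\<^bsub>G\<^esub>"
| "chain_prod G h i (Suc j) = (if Suc j \<le> i then \<one>\<^bsub>G\<^esub> else h (Suc j) \<otimes>\<^bsub>G\<^esub> chain_prod G h i j)"

lemma chain_prod_trivial: "j \<le> i \<Longrightarrow> chain_prod G h i j = \<one>\<^bsub>G\<^esub>"
  by (cases j) auto

context group
begin

lemma chain_prod_closed: "h \<in> {Suc i..j} \<rightarrow> carrier G \<Longrightarrow> chain_prod G h i j \<in> carrier G"
proof (induction j)
  case (Suc j)
  then have "h \<in> {Suc i..j} \<rightarrow> carrier G" by auto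
  with Suc show ?case by auto
qed simp

lemma chain_prod_split:
  assumes "i \<le> i'" "i' \<le> j" "h \<in> {Suc i..j} \<rightarrow> carrier G"
  shows "chain_prod G h i j = chain_prod G h i' j \<otimes> chain_prod G h i i'"
  using assms(2,3)
proof (induction j rule: dec_induct)
  case base
  then show ?case by (simp add: chain_prod_trivial chain_prod_closed)
next
  case (step k)
  have "h \<in> {Suc i..k} \<rightarrow> carrier G" "h \<in> {Suc i'..k} \<rightarrow> carrier G"
    "h \<in> {Suc i..i'} \<rightarrow> carrier G" "h (Suc k) \<in> carrier G"
    using step.prems step.hyps(1) assms(1) by auto
  with step show ?case
    using assms(1) by (simp add: m_assoc chain_prod_closed)
qed

end

context group_action
begin

lemma is_group: "group G"
  using group_hom group_hom.axioms(1) by blast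

lemma act_one_image: "A \<subseteq> E \<Longrightarrow> \<phi> \<one> ` A = A"
  unfolding id_eq_one[symmetric] by (auto simp: subset_iff image_iff)

lemma act_mult_image:
  assumes "g1 \<in> carrier G" "g2 \<in> carrier G" "A \<subseteq> E"
  shows "\<phi> (g1 \<otimes> g2) ` A = \<phi> g1 ` \<phi> g2 ` A"
proof -
  have "\<phi> (g1 \<otimes> g2) x = \<phi> g1 (\<phi> g2 x)" if "x \<in> A" for x
    using that assms composition_rule by blast
  then show ?thesis
    by (simp add: image_image cong: image_cong)
qed

lemma act_inv_image: "\<lbrakk> g \<in> carrier G; A \<subseteq> E \<rbrakk> \<Longrightarrow> \<phi> (inv g) ` \<phi> g ` A = A"
  using is_group by (simp add: act_mult_image[symmetric] group.l_inv act_one_image)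

end

locale cyclic_chain = group_action G E \<phi>
  for G :: "('a, 'c) monoid_scheme" (structure) and E :: "'b set" and \<phi> +
  fixes n :: nat and Xs :: "nat \<Rightarrow> 'b set" and h :: "nat \<Rightarrow> 'a"
  assumes n_pos: "0 < n"
    and Xs_subset: "\<forall>i\<in>{1..n}. Xs i \<subseteq> E"
    and h_carrier: "\<forall>i\<in>{1..n}. h i \<in> carrier G"
    and Xs_wrap: "Xs (n + 1) = Xs 1"
    and act_h_subset: "\<forall>i\<in>{1..n}. \<phi> (h i) ` Xs i \<subseteq> Xs (i + 1)"
    and E_cover: "E = (\<Union>i\<in>{1..n}. Xs (i + 1) - \<phi> (h i) ` Xs i)"
begin

sublocale group G
  by (rule is_group)

definition layer :: "nat \<Rightarrow> 'b set" where
  "layer i = (if i = 0 then Xs 1 else Xs (i + 1) - \<phi> (h i) ` Xs i)"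

definition piece :: "nat \<Rightarrow> 'b set" where
  "piece i = \<phi> (chain_prod G h i n) ` layer i"

lemma Xs_subset_E: "i \<le> n \<Longrightarrow> Xs (i + 1) \<subseteq> E"
  using Xs_subset Xs_wrap n_pos by (cases "i = n") auto

lemma h_funcset: "j \<le> n \<Longrightarrow> h \<in> {Suc i..j} \<rightarrow> carrier G"
  using h_carrier by auto

lemma layer_subset: "layer i \<subseteq> Xs (i + 1)"
  by (auto simp: layer_def)

lemma layers_cover: "(\<Union>i\<in>{1..n}. layer i) = E"
  using E_cover unfolding layer_def by auto

lemma act_chain_prod_subset:
  assumes "i \<le> j" "j \<le> n"
  shows "\<phi> (chain_prod G h i j) ` Xs (i + 1) \<subseteq> Xs (j + 1)"
  using assms
proof (induction j rule: dec_induct)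
  case base
  then show ?case
    using Xs_subset_E[of i] by (simp add: chain_prod_trivial act_one_image)
next
  case (step k)
  have "h (Suc k) \<in> carrier G" "chain_prod G h i k \<in> carrier G"
    using step h_carrier by (auto intro: chain_prod_closed h_funcset)
  moreover have "Xs (i + 1) \<subseteq> E"
    using step by (intro Xs_subset_E) simp
  ultimately have "\<phi> (chain_prod G h i (Suc k)) ` Xs (i + 1)
      = \<phi> (h (Suc k)) ` \<phi> (chain_prod G h i k) ` Xs (i + 1)"
    using step.hyps by (simp add: act_mult_image)
  also have "\<dots> \<subseteq> \<phi> (h (Suc k)) ` Xs (Suc k)"
    using step by (intro image_mono) simp
  also have "\<dots> \<subseteq> Xs (Suc k + 1)"
    using act_h_subset step.prems by simp
  finally show ?case .
qed

lemma piece_subset: "i \<le> n \<Longrightarrow> piece i \<subseteq> Xs 1"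
  using act_chain_prod_subset[of i n] layer_subset Xs_wrap unfolding piece_def by fastforce

lemma act_inv_piece:
  assumes "i \<le> n"
  shows "\<phi> (inv (chain_prod G h i n)) ` piece i = layer i"
proof -
  have "layer i \<subseteq> E"
    using layer_subset Xs_subset_E[OF assms] by blast
  then show ?thesis
    unfolding piece_def by (simp add: act_inv_image chain_prod_closed h_funcset)
qed

lemma piece_disjoint:
  assumes "i < i'" "i' \<le> n"
  shows "piece i \<inter> piece i' = {}"
proof -
  define k where "k = i' - 1"
  have k: "i' = Suc k" "i \<le> k" "k \<le> n"
    using assms by (simp_all add: k_def)
  define c where "c = chain_prod G h i i'"
  define g where "g = chain_prod G h i' n"
  have carrier: "h i' \<in> carrier G" "chain_prod G h i k \<in> carrier G" "c \<in> carrier G" "g \<in> carrier G"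
    using k assms h_carrier unfolding c_def g_def by (simp_all add: chain_prod_closed h_funcset)
  have layer_E: "layer i \<subseteq> E" "layer i' \<subseteq> E"
    using layer_subset[of i] layer_subset[of i'] Xs_subset_E[of i] Xs_subset_E[of i'] k assms
    by simp_all
  have "\<phi> c ` layer i = \<phi> (h i') ` \<phi> (chain_prod G h i k) ` layer i"
    using k carrier layer_E by (simp add: c_def act_mult_image)
  also have "\<dots> \<subseteq> \<phi> (h i') ` \<phi> (chain_prod G h i k) ` Xs (i + 1)"
    using layer_subset by (intro image_mono)
  also have "\<dots> \<subseteq> \<phi> (h i') ` Xs i'"
    using k act_chain_prod_subset[of i k] by (intro image_mono) simp
  finally have c_layer: "\<phi> c ` layer i \<subseteq> \<phi> (h i') ` Xs i'" .
  have "chain_prod G h i n = g \<otimes> c"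
    using chain_prod_split[of i i' n] assms h_funcset by (simp add: c_def g_def)
  then have "piece i = \<phi> g ` \<phi> c ` layer i"
    using carrier layer_E by (simp add: piece_def act_mult_image)
  moreover have "piece i' = \<phi> g ` layer i'"
    by (simp add: piece_def g_def)
  moreover have "\<phi> c ` layer i \<subseteq> E"
    using surj_prop[OF carrier(3)] layer_E(1) by blast
  ultimately have "piece i \<inter> piece i' = \<phi> g ` (\<phi> c ` layer i \<inter> layer i')"
    using inj_on_image_Int[OF inj_prop[OF carrier(4)]] layer_E(2) by simp
  also have "\<dots> = {}"
    using c_layer assms(1) unfolding layer_def[of i'] by auto
  finally show ?thesis .
qed

lemma pieces_disjoint: "\<lbrakk> i \<noteq> i'; i \<le> n; i' \<le> n \<rbrakk> \<Longrightarrow> piece i \<inter> piece i' = {}"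
  by (metis Int_commute linorder_neqE_nat piece_disjoint)

lemma act_inv_pieces_cover: "(\<Union>j<n. \<phi> (inv (chain_prod G h (Suc j) n)) ` piece (Suc j)) = E"
proof -
  have "(\<Union>j<n. \<phi> (inv (chain_prod G h (Suc j) n)) ` piece (Suc j)) = (\<Union>j<n. layer (Suc j))"
    by (simp add: act_inv_piece)
  also have "\<dots> = (\<Union>i\<in>{1..n}. layer i)"
    by (simp only: image_Suc_lessThan[symmetric] image_image)
  finally show ?thesis
    using layers_cover by simp
qed

lemma paradoxical_decomposition_pieces:
  "paradoxical_decomposition G E \<phi> n 2
     (\<lambda>j. piece (Suc j)) (\<lambda>j. if j = 0 then E - Xs 1 else piece 0)
     (\<lambda>j. inv (chain_prod G h (Suc j) n)) (\<lambda>j. if j = 0 then \<one> else inv (chain_prod G h 0 n))"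
proof -
  have Xs_1: "Xs 1 \<subseteq> E"
    using Xs_subset_E[of 0] by simp
  have "\<phi> \<one> ` (E - Xs 1) \<union> \<phi> (inv (chain_prod G h 0 n)) ` piece 0 = E"
    using Xs_1 by (auto simp: act_one_image act_inv_piece layer_def)
  then have B_cover: "(\<Union>j::nat<2. \<phi> (if j = 0 then \<one> else inv (chain_prod G h 0 n))
                             ` (if j = 0 then E - Xs 1 else piece 0)) = E"
    by (simp add: numeral_2_eq_2 lessThan_Suc Un_commute)
  have piece_disjoint_complement: "piece i \<inter> (E - Xs 1) = {}" if "i \<le> n" for i
    using piece_subset[OF that] by blast
  show ?thesis
    unfolding paradoxical_decomposition_def
  proof (intro conjI)
    show "\<forall>i<n. piece (Suc i) \<subseteq> E"
      using piece_subset Xs_1 by (meson Suc_leI subset_trans)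
    show "\<forall>j::nat<2. (if j = 0 then E - Xs 1 else piece 0) \<subseteq> E"
      using piece_subset[of 0] Xs_1 by auto
    show "\<forall>i<n. inv (chain_prod G h (Suc i) n) \<in> carrier G"
      by (simp add: chain_prod_closed h_funcset)
    show "\<forall>j::nat<2. (if j = 0 then \<one> else inv (chain_prod G h 0 n)) \<in> carrier G"
      by (simp add: chain_prod_closed h_funcset)
    show "\<forall>i<n. \<forall>i'<n. i \<noteq> i' \<longrightarrow> piece (Suc i) \<inter> piece (Suc i') = {}"
      using pieces_disjoint by simp
    show "\<forall>j::nat<2. \<forall>j'<2. j \<noteq> j' \<longrightarrow>
        (if j = 0 then E - Xs 1 else piece 0) \<inter> (if j' = 0 then E - Xs 1 else piece 0) = {}"
      using piece_disjoint_complement[of 0] by (auto simp: numeral_2_eq_2 less_Suc_eq)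
    show "\<forall>i<n. \<forall>j::nat<2. piece (Suc i) \<inter> (if j = 0 then E - Xs 1 else piece 0) = {}"
      using piece_disjoint_complement pieces_disjoint by (auto simp: numeral_2_eq_2 less_Suc_eq)
  qed (use act_inv_pieces_cover B_cover in simp_all)
qed

lemma paradoxical_with_n_plus_2: "paradoxical_with G E \<phi> (n + 2)"
  using paradoxical_decomposition_pieces unfolding paradoxical_with_def by blast

end

theorem mainTheorem13:
  fixes G :: "('a, 'c) monoid_scheme" and X :: "'b set" and act :: "'a \<Rightarrow> 'b \<Rightarrow> 'b"
    and n :: nat and Xs :: "nat \<Rightarrow> 'b set" and h :: "nat \<Rightarrow> 'a"
  assumes "group_action G X act"
    and "\<forall>i\<in>{1..n}. Xs i \<subseteq> X"
    and "\<forall>i\<in>{1..n}. h i \<in> carrier G"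
    and "Xs (n + 1) = Xs 1"
    and "\<forall>i\<in>{1..n}. act (h i) ` Xs i \<subseteq> Xs (i + 1)"
    and "X = (\<Union>i\<in>{1..n}. Xs (i + 1) - act (h i) ` Xs i)"
  shows "paradoxical G X act \<and> tarski_number G X act \<le> enat (n + 2)"
proof -
  obtain m where "m \<le> n + 2" "paradoxical_with G X act m"
  proof (cases "n = 0")
    case True
    then have "X = {}"
      using assms(6) by simp
    then show ?thesis
      using that[of 0] paradoxical_with_empty by blast
  next
    case False
    interpret cyclic_chain G X act n Xs h
      using assms False by (intro cyclic_chain.intro cyclic_chain_axioms.intro) simp_all
    show ?thesis
      using that paradoxical_with_n_plus_2 by blast
  qed
  then show ?thesis
    using paradoxicalI tarski_number_le order_trans enat_ord_simps(1) by metis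
qed

end
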